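(* Let $\rho_n,\rho\in\mathcal{P}(\mathbb{T}^d)$ with $\rho_n\to\rho$ in $W_2$, and suppose that $D^2u[\rho_n]\succeq-\lambda_0^n$ with $\lambda_0^n\in[0,\infty)$ and $\lambda_0^n\to\lambda_0\in[0,\infty)$. Then $D^2u[\rho]\succeq-\lambda_0$.
   Context: $\mathbb{T}^d=\mathbb{R}^d/\mathbb{Z}^d$; $W_2$ is the quadratic Wasserstein distance on $\mathcal{P}(\mathbb{T}^d)$ for the flat torus distance. $V,W\in C^{2,1}(\mathbb{T}^d)$. For $\rho$ with strictly positive density, $u[\rho]=\log\rho+V+W*\rho$, $W*\rho(x)=\int W(x-y)\,d\rho(y)$. $D^2u[\rho]\succeq-\lambda$ (with $\lambda<\infty$) means that $\rho$ has a positive density, $u[\rho]$ is well-defined and $D^2u[\rho]+\lambda I_d\succeq0$ in the weak (semi-convex) sense. *)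

theory Defs
  imports "HOL-Probability.Probability"
begin

text \<open>Points of T^d are represented by points of
  R^d (type real^'d), functions on T^d by Z^d-periodic functions on R^d, and
  probability measures on T^d by Borel probability measures on R^d concentrated
  on the fundamental cell [0,1)^d.\<close>

definition int_lattice :: "(real^'d) set" where
  "int_lattice = {k. \<forall>i. k $ i \<in> \<int>}"

definition unit_cell :: "(real^'d) set" where
  "unit_cell = {x. \<forall>i. 0 \<le> x $ i \<and> x $ i < 1}"

definition periodic :: "(real^'d \<Rightarrow> 'b) \<Rightarrow> bool" where
  "periodic f \<longleftrightarrow> (\<forall>x k. k \<in> int_lattice \<longrightarrow> f (x + k) = f x)"

definition torus_dist :: "real^'d \<Rightarrow> real^'d \<Rightarrow> real" where
  "torus_dist x y = Inf ((\<lambda>k. norm (x - y - k)) ` int_lattice)"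

definition torus_prob :: "(real^'d) measure \<Rightarrow> bool" where
  "torus_prob \<mu> \<longleftrightarrow> prob_space \<mu> \<and> sets \<mu> = sets borel \<and> emeasure \<mu> (- unit_cell) = 0"

definition couplings :: "(real^'d) measure \<Rightarrow> (real^'d) measure \<Rightarrow> (((real^'d) \<times> (real^'d)) measure) set" where
  "couplings \<mu> \<nu> = {\<pi>. prob_space \<pi> \<and> sets \<pi> = sets borel
       \<and> distr \<pi> borel fst = \<mu> \<and> distr \<pi> borel snd = \<nu>}"

definition W2 :: "(real^'d) measure \<Rightarrow> (real^'d) measure \<Rightarrow> real" where
  "W2 \<mu> \<nu> = sqrt (Inf ((\<lambda>\<pi>. \<integral>p. (torus_dist (fst p) (snd p))\<^sup>2 \<partial>\<pi>) ` couplings \<mu> \<nu>))"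

definition C21_torus :: "(real^'d \<Rightarrow> real) \<Rightarrow> bool" where
  "C21_torus f \<longleftrightarrow> periodic f \<and>
     (\<exists>g H L. (\<forall>x. (f has_derivative (\<lambda>h. g x \<bullet> h)) (at x))
            \<and> (\<forall>x. (g has_derivative (\<lambda>h. H x *v h)) (at x))
            \<and> (\<forall>x y. norm (H x - H y) \<le> L * norm (x - y)))"

definition conv :: "(real^'d \<Rightarrow> real) \<Rightarrow> (real^'d) measure \<Rightarrow> real^'d \<Rightarrow> real" where
  "conv W \<rho> x = (\<integral>y. W (x - y) \<partial>\<rho>)"

definition pos_density :: "(real^'d) measure \<Rightarrow> (real^'d \<Rightarrow> real) \<Rightarrow> bool" where
  "pos_density \<rho> f \<longleftrightarrow> f \<in> borel_measurable borel \<and> periodic f \<and> (\<forall>x. 0 < f x)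
      \<and> \<rho> = density lborel (\<lambda>x. ennreal (indicator unit_cell x * f x))"

definition u_pot :: "(real^'d \<Rightarrow> real) \<Rightarrow> (real^'d \<Rightarrow> real) \<Rightarrow> (real^'d) measure
      \<Rightarrow> (real^'d \<Rightarrow> real) \<Rightarrow> real^'d \<Rightarrow> real" where
  "u_pot V W \<rho> f x = ln (f x) + V x + conv W \<rho> x"

text \<open>D^2 u[rho] \<succeq> -lambda in the weak (semi-convex) sense: rho has a strictly
  positive density f such that u[rho] + lambda |x|^2/2 is convex on R^d.\<close>
definition hess_lower_bound :: "(real^'d \<Rightarrow> real) \<Rightarrow> (real^'d \<Rightarrow> real) \<Rightarrow> (real^'d) measure
      \<Rightarrow> real \<Rightarrow> bool" where
  "hess_lower_bound V W \<rho> lam \<longleftrightarrow> (\<exists>f. pos_density \<rho> f \<and>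
      convex_on UNIV (\<lambda>x. u_pot V W \<rho> f x + lam / 2 * (norm x)\<^sup>2))"

end

theory Submission
  imports Defs "HOL-Complex_Analysis.Great_Picard"
begin

(* Along a lattice direction, a periodic function u with u + lambda |x|^2 / 2 convex oscillates
   by at most O(lambda); hence u[rho_n] is Lipschitz uniformly in n. Since V and W * rho_n are
   uniformly Lipschitz as well, so are the log-densities log rho_n, and as rho_n has mass one on
   the unit cell they are also uniformly bounded. By Arzela-Ascoli a subsequence of log rho_n
   converges pointwise to a periodic function g. Convergence in W2 implies convergence of the
   integrals of periodic Lipschitz functions (W1 <= W2); these functions determine measures on
   the torus, so rho = exp g, and they give W * rho_n -> W * rho pointwise. Thus u[rho_n] -> u[rho]
   pointwise along the subsequence, and the convexity of u + lambda |x|^2 / 2 passes to the limit. *)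

lemma int_lattice_0: "0 \<in> int_lattice"
  by (simp add: int_lattice_def)

lemma int_lattice_scaleR: "k \<in> int_lattice \<Longrightarrow> m \<in> \<int> \<Longrightarrow> m *\<^sub>R k \<in> int_lattice"
  by (auto simp: int_lattice_def)

lemma axis_in_int_lattice: "axis i 1 \<in> int_lattice"
  by (auto simp: int_lattice_def axis_def)

lemma countable_int_lattice: "countable (int_lattice :: (real^'d) set)"
proof -
  have "countable (\<int> :: real set)"
    unfolding Ints_def by simp
  then show ?thesis
    unfolding int_lattice_def by (intro countable_vector) auto
qed

definition lattice_floor :: "real^'d \<Rightarrow> real^'d" where
  "lattice_floor x = (\<chi> i. of_int \<lfloor>x $ i\<rfloor>)"

lemma lattice_floor_in_int_lattice: "lattice_floor x \<in> int_lattice"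
  by (auto simp: int_lattice_def lattice_floor_def)

lemma diff_lattice_floor_in_unit_cell: "x - lattice_floor x \<in> unit_cell"
  by (auto simp: unit_cell_def lattice_floor_def) linarith

lemma unit_cell_subset_cbox: "unit_cell \<subseteq> cbox 0 (1 :: real^'d)"
  by (auto simp: unit_cell_def mem_box_cart less_imp_le)

lemma unit_cell_subset_cbox_enlarged: "unit_cell \<subseteq> cbox (- 1) (2 :: real^'d)"
proof
  fix x :: "real^'d"
  assume "x \<in> unit_cell"
  then have "0 \<le> x $ i \<and> x $ i < 1" for i
    by (simp add: unit_cell_def)
  then show "x \<in> cbox (- 1) 2"
    by (simp add: mem_box_cart) (smt (verit))
qed

lemma norm_diff_unit_cell_le:
  assumes "x \<in> unit_cell" "y \<in> unit_cell"
  shows "norm (x - y :: real^'d) \<le> CARD('d)"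
proof -
  have "norm (x - y) \<le> (\<Sum>i\<in>UNIV. \<bar>(x - y) $ i\<bar>)"
    by (rule norm_le_l1_cart)
  also have "\<dots> \<le> (\<Sum>i\<in>(UNIV :: 'd set). 1)"
  proof (rule sum_mono)
    fix i
    have "0 \<le> x $ i" "x $ i < 1" "0 \<le> y $ i" "y $ i < 1"
      using assms by (auto simp: unit_cell_def)
    then show "\<bar>(x - y) $ i\<bar> \<le> 1"
      by simp
  qed
  finally show ?thesis
    by simp
qed

lemma unit_cell_in_sets_borel: "unit_cell \<in> sets (borel :: (real^'d) measure)"
proof -
  have "unit_cell = (\<Inter>i. {x :: real^'d. 0 \<le> x $ i} \<inter> {x. x $ i < 1})"
    by (auto simp: unit_cell_def)
  also have "\<dots> \<in> sets borel"
    by (intro sets.finite_INT sets.Int borel_closed borel_open closed_Collect_le open_Collect_less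
          continuous_intros) auto
  finally show ?thesis .
qed

lemma emeasure_unit_cell: "emeasure lborel (unit_cell :: (real^'d) set) = 1"
proof (rule antisym)
  have "emeasure lborel (unit_cell :: (real^'d) set) \<le> emeasure lborel (cbox 0 (1 :: real^'d))"
    using unit_cell_subset_cbox by (intro emeasure_mono) auto
  also have "\<dots> = 1"
    by (subst emeasure_lborel_cbox) (auto simp: inner_axis Basis_vec_def Basis_real_def intro!: prod.neutral)
  finally show "emeasure lborel (unit_cell :: (real^'d) set) \<le> 1" .
  have "(1 :: ennreal) = emeasure lborel (box 0 (1 :: real^'d))"
    by (subst emeasure_lborel_box) (auto simp: inner_axis Basis_vec_def Basis_real_def intro!: prod.neutral)
  also have "\<dots> \<le> emeasure lborel (unit_cell :: (real^'d) set)"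
    using unit_cell_in_sets_borel by (intro emeasure_mono) (auto simp: unit_cell_def mem_box_cart less_imp_le)
  finally show "1 \<le> emeasure lborel (unit_cell :: (real^'d) set)" .
qed

lemma periodic_minus: "periodic f \<Longrightarrow> k \<in> int_lattice \<Longrightarrow> f (x - k) = f x"
  unfolding periodic_def by (metis diff_add_cancel)

lemma periodic_diff_lattice_floor: "periodic f \<Longrightarrow> f (x - lattice_floor x) = f x"
  by (rule periodic_minus[OF _ lattice_floor_in_int_lattice])

lemma lipschitz_borel_measurable:
  fixes f :: "'a::metric_space \<Rightarrow> 'b::metric_space"
  shows "L-lipschitz_on UNIV f \<Longrightarrow> f \<in> borel_measurable borel"
  by (intro borel_measurable_continuous_onI lipschitz_on_continuous_on)

lemma periodic_lipschitz_oscillation: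
  fixes f :: "real^'d \<Rightarrow> real"
  assumes "periodic f" "K-lipschitz_on UNIV f"
  shows "\<bar>f x - f y\<bar> \<le> K * CARD('d)"
proof -
  have "\<bar>f x - f y\<bar> = \<bar>f (x - lattice_floor x) - f (y - lattice_floor y)\<bar>"
    using periodic_diff_lattice_floor[OF assms(1)] by simp
  also have "\<dots> \<le> K * norm ((x - lattice_floor x) - (y - lattice_floor y))"
    using lipschitz_on_normD[OF assms(2)] by simp
  also have "\<dots> \<le> K * CARD('d)"
    using lipschitz_on_nonneg[OF assms(2)]
    by (intro mult_left_mono norm_diff_unit_cell_le diff_lattice_floor_in_unit_cell)
  finally show ?thesis .
qed

lemma periodic_lipschitz_bounded:
  fixes f :: "real^'d \<Rightarrow> real"
  assumes "periodic f" "K-lipschitz_on UNIV f"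
  obtains B where "\<And>x. \<bar>f x\<bar> \<le> B"
proof
  fix x
  show "\<bar>f x\<bar> \<le> \<bar>f 0\<bar> + K * CARD('d)"
    using periodic_lipschitz_oscillation[OF assms, of x 0] by linarith
qed

text \<open>Pairs of points at distance below 1 are moved into \<open>cbox (- 1) 2\<close> by a common lattice shift;
  other pairs are reduced to the unit cell separately.\<close>

lemma periodic_lipschitz_from_cbox:
  fixes f :: "real^'d \<Rightarrow> real"
  assumes per: "periodic f" and lip: "G-lipschitz_on (cbox (- 1) 2) f"
  shows "(G * CARD('d))-lipschitz_on UNIV f"
proof (rule lipschitz_onI)
  have G: "0 \<le> G"
    using lipschitz_on_nonneg[OF lip] .
  then show "0 \<le> G * CARD('d)"
    by simp
  have G_card: "G \<le> G * CARD('d)"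
    using mult_left_mono[of 1 "real CARD('d)" G] G by simp
  fix x y :: "real^'d"
  show "dist (f x) (f y) \<le> G * CARD('d) * dist x y"
  proof (cases "norm (x - y) < 1")
    case True
    define x' where "x' = x - lattice_floor x"
    define y' where "y' = y - lattice_floor x"
    have "x' \<in> unit_cell"
      unfolding x'_def by (rule diff_lattice_floor_in_unit_cell)
    moreover have "\<bar>(y' - x') $ i\<bar> < 1" for i
      using True component_le_norm_cart[of "y - x" i] by (simp add: x'_def y'_def norm_minus_commute)
    ultimately have "x' \<in> cbox (- 1) 2" "y' \<in> cbox (- 1) 2"
      by (auto simp: mem_box_cart unit_cell_def abs_less_iff) (smt (verit))+
    then have "dist (f x') (f y') \<le> G * dist x' y'"
      by (rule lipschitz_onD[OF lip])
    moreover have "f x' = f x" "f y' = f y" "dist x' y' = dist x y"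
      using periodic_minus[OF per lattice_floor_in_int_lattice] by (simp_all add: x'_def y'_def dist_norm)
    ultimately have "dist (f x) (f y) \<le> G * dist x y"
      by simp
    also have "\<dots> \<le> G * CARD('d) * dist x y"
      by (rule mult_right_mono[OF G_card zero_le_dist])
    finally show ?thesis .
  next
    case False
    define x' where "x' = x - lattice_floor x"
    define y' where "y' = y - lattice_floor y"
    have cell: "x' \<in> unit_cell" "y' \<in> unit_cell"
      unfolding x'_def y'_def by (rule diff_lattice_floor_in_unit_cell)+
    have "dist (f x) (f y) = dist (f x') (f y')"
      using periodic_diff_lattice_floor[OF per] by (simp add: x'_def y'_def)
    also have "\<dots> \<le> G * dist x' y'"
      using cell unit_cell_subset_cbox_enlarged by (intro lipschitz_onD[OF lip]) auto
    also have "\<dots> \<le> G * CARD('d)"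
      using norm_diff_unit_cell_le[OF cell] G by (simp add: dist_norm mult_left_mono)
    also have "\<dots> \<le> G * CARD('d) * dist x y"
      using False G mult_left_mono[of 1 "dist x y" "G * CARD('d)"] by (simp add: dist_norm)
    finally show ?thesis .
  qed
qed

lemma C21_torus_periodic_lipschitz:
  fixes f :: "real^'d \<Rightarrow> real"
  assumes "C21_torus f"
  obtains L where "periodic f" "L-lipschitz_on UNIV f"
proof -
  obtain g H where df: "\<And>x. (f has_derivative (\<lambda>h. g x \<bullet> h)) (at x)"
    and dg: "\<And>x. (g has_derivative (\<lambda>h. H x *v h)) (at x)"
    using assms unfolding C21_torus_def by blast
  have "continuous_on UNIV g"
    using dg by (intro continuous_at_imp_continuous_on) (auto intro: has_derivative_continuous)
  then have "compact (g ` cbox (- 1) 2)"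
    by (intro compact_continuous_image) (auto intro: continuous_on_subset)
  then obtain G where G: "0 \<le> G" "\<And>x. x \<in> cbox (- 1) 2 \<Longrightarrow> norm (g x) \<le> G"
    unfolding compact_eq_bounded_closed bounded_pos by (metis image_eqI less_imp_le)
  have "G-lipschitz_on (cbox (- 1) 2) f"
  proof (rule bounded_derivative_imp_lipschitz)
    show "(f has_derivative (\<lambda>h. g x \<bullet> h)) (at x within cbox (- 1) 2)" for x
      using df has_derivative_at_withinI by blast
    show "onorm (\<lambda>h. g x \<bullet> h) \<le> G" if "x \<in> cbox (- 1) 2" for x
    proof (rule onorm_le)
      fix h
      have "norm (g x \<bullet> h) \<le> norm (g x) * norm h"
        using Cauchy_Schwarz_ineq2 by simp
      also have "\<dots> \<le> G * norm h"
        using G(2)[OF that] by (simp add: mult_right_mono)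
      finally show "norm (g x \<bullet> h) \<le> G * norm h" .
    qed
  qed (use G in auto)
  then show ?thesis
    using that assms periodic_lipschitz_from_cbox unfolding C21_torus_def by blast
qed

section \<open>Torus distance and Wasserstein convergence\<close>

lemma torus_dist_nonneg: "0 \<le> torus_dist x y"
  unfolding torus_dist_def using int_lattice_0 by (intro cInf_greatest) auto

lemma torus_dist_le: "k \<in> int_lattice \<Longrightarrow> torus_dist x y \<le> norm (x - y - k)"
  unfolding torus_dist_def by (rule cInf_lower) (auto intro: bdd_belowI[of _ 0])

lemma torus_dist_le_card: "torus_dist x (y :: real^'d) \<le> CARD('d)"
proof -
  have "torus_dist x y \<le> norm ((x - y - lattice_floor (x - y)) - 0)"
    using torus_dist_le[OF lattice_floor_in_int_lattice] by simp
  also have "\<dots> \<le> CARD('d)"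
    by (rule norm_diff_unit_cell_le[OF diff_lattice_floor_in_unit_cell]) (simp add: unit_cell_def)
  finally show ?thesis .
qed

lemma borel_measurable_torus_dist:
  "(\<lambda>p. torus_dist (fst p) (snd p :: real^'d)) \<in> borel_measurable borel"
  unfolding torus_dist_def
  by (intro borel_measurable_cINF_real countable_int_lattice borel_measurable_continuous_onI continuous_intros)

lemma periodic_lipschitz_torus_dist:
  assumes "periodic h" "L-lipschitz_on UNIV h"
  shows "\<bar>h x - h y\<bar> \<le> L * torus_dist x y"
proof (cases "L = 0")
  case True
  then show ?thesis
    using lipschitz_on_normD[OF assms(2), of x y] torus_dist_nonneg by simp
next
  case False
  then have L: "0 < L"
    using lipschitz_on_nonneg[OF assms(2)] by simp
  have "\<bar>h x - h y\<bar> / L \<le> torus_dist x y"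
    unfolding torus_dist_def
  proof (rule cInf_greatest)
    fix z
    assume "z \<in> (\<lambda>k. norm (x - y - k)) ` int_lattice"
    then obtain k where k: "k \<in> int_lattice" "z = norm (x - (y + k))"
      by (auto simp: algebra_simps)
    have "\<bar>h x - h y\<bar> = \<bar>h x - h (y + k)\<bar>"
      using assms(1) k(1) by (simp add: periodic_def)
    also have "\<dots> \<le> L * z"
      using lipschitz_on_normD[OF assms(2)] k(2) by simp
    finally show "\<bar>h x - h y\<bar> / L \<le> z"
      using L by (simp add: field_simps)
  qed (use int_lattice_0 in auto)
  then show ?thesis
    using L by (simp add: field_simps)
qed

lemma pair_measure_in_couplings:
  fixes \<mu> \<nu> :: "(real^'d) measure"
  assumes "torus_prob \<mu>" "torus_prob \<nu>"
  shows "\<mu> \<Otimes>\<^sub>M \<nu> \<in> couplings \<mu> \<nu>"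
proof -
  interpret \<mu>: prob_space \<mu>
    using assms(1) by (simp add: torus_prob_def)
  interpret \<nu>: prob_space \<nu>
    using assms(2) by (simp add: torus_prob_def)
  have sets: "sets \<mu> = sets borel" "sets \<nu> = sets borel"
    using assms by (simp_all add: torus_prob_def)
  have "sets (\<mu> \<Otimes>\<^sub>M \<nu>) = sets (borel :: ((real^'d) \<times> (real^'d)) measure)"
    using sets_pair_measure_cong[OF sets] borel_prod[where 'a="real^'d" and 'b="real^'d"] by metis
  moreover have "distr (\<mu> \<Otimes>\<^sub>M \<nu>) borel fst = \<mu>"
  proof -
    have "distr (\<mu> \<Otimes>\<^sub>M \<nu>) borel fst = distr (\<mu> \<Otimes>\<^sub>M \<nu>) \<mu> fst"
      by (rule distr_cong) (simp_all add: sets)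
    also have "\<dots> = \<mu>"
      by (rule \<nu>.distr_pair_fst)
    finally show ?thesis .
  qed
  moreover have "distr (\<mu> \<Otimes>\<^sub>M \<nu>) borel snd = \<nu>"
  proof (rule measure_eqI)
    fix A
    assume "A \<in> sets (distr (\<mu> \<Otimes>\<^sub>M \<nu>) borel snd)"
    then have A: "A \<in> sets \<nu>"
      using sets by simp
    have "snd \<in> measurable (\<mu> \<Otimes>\<^sub>M \<nu>) borel"
      using measurable_snd[of \<mu> \<nu>] measurable_cong_sets[OF refl sets(2)] by blast
    then have "emeasure (distr (\<mu> \<Otimes>\<^sub>M \<nu>) borel snd) A = emeasure (\<mu> \<Otimes>\<^sub>M \<nu>) (space \<mu> \<times> A)"
      using A sets by (subst emeasure_distr) (auto simp: space_pair_measure vimage_snd cong: sets_eq_imp_space_eq)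
    also have "\<dots> = emeasure \<nu> A"
      using A by (simp add: \<nu>.emeasure_pair_measure_Times \<mu>.emeasure_space_1)
    finally show "emeasure (distr (\<mu> \<Otimes>\<^sub>M \<nu>) borel snd) A = emeasure \<nu> A" .
  qed (simp add: sets)
  ultimately show ?thesis
    unfolding couplings_def by (simp add: prob_space_pair \<mu>.prob_space_axioms \<nu>.prob_space_axioms)
qed

lemma coupling_integral_diff_le:
  fixes h :: "real^'d \<Rightarrow> real"
  assumes \<pi>: "\<pi> \<in> couplings \<mu> \<nu>" and h: "periodic h" "L-lipschitz_on UNIV h"
  shows "((\<integral>x. h x \<partial>\<mu>) - (\<integral>x. h x \<partial>\<nu>))\<^sup>2 \<le> L\<^sup>2 * (\<integral>p. (torus_dist (fst p) (snd p))\<^sup>2 \<partial>\<pi>)"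
proof -
  let ?d = "\<lambda>p. torus_dist (fst p) (snd p :: real^'d)"
  interpret prob_space \<pi>
    using \<pi> by (simp add: couplings_def)
  have sets: "sets \<pi> = sets borel"
    using \<pi> by (simp add: couplings_def)
  note meas = measurable_cong_sets[OF sets refl]
  obtain B where B: "\<And>x. \<bar>h x\<bar> \<le> B"
    using periodic_lipschitz_bounded[OF h] by blast
  have hm: "h \<in> borel_measurable borel"
    by (rule lipschitz_borel_measurable[OF h(2)])
  have fst: "fst \<in> measurable \<pi> borel" and snd: "snd \<in> measurable \<pi> borel"
    unfolding meas by (simp_all add: borel_measurable_continuous_onI continuous_on_fst continuous_on_snd)
  have int_fst: "integrable \<pi> (\<lambda>p. h (fst p))" and int_snd: "integrable \<pi> (\<lambda>p. h (snd p))"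
    using B measurable_compose[OF fst hm] measurable_compose[OF snd hm]
    by (auto intro!: integrable_const_bound[where B=B])
  have diff: "(\<integral>x. h x \<partial>\<mu>) - (\<integral>x. h x \<partial>\<nu>) = (\<integral>p. h (fst p) - h (snd p) \<partial>\<pi>)"
    using \<pi> integral_distr[OF fst hm] integral_distr[OF snd hm]
      Bochner_Integration.integral_diff[OF int_fst int_snd] by (simp add: couplings_def)
  have dm: "?d \<in> borel_measurable \<pi>"
    unfolding meas by (rule borel_measurable_torus_dist)
  have d_bounds: "0 \<le> ?d p" "?d p \<le> CARD('d)" for p
    using torus_dist_nonneg torus_dist_le_card by auto
  have d_int: "integrable \<pi> ?d"
    by (rule integrable_const_bound[where B="CARD('d)"]) (use dm d_bounds in auto)
  have d2_int: "integrable \<pi> (\<lambda>p. (?d p)\<^sup>2)"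
    by (rule integrable_const_bound[where B="(real CARD('d))\<^sup>2"])
      (use dm d_bounds in \<open>auto intro: power_mono\<close>)
  have "\<bar>\<integral>p. h (fst p) - h (snd p) \<partial>\<pi>\<bar> \<le> (\<integral>p. L * ?d p \<partial>\<pi>)"
  proof (rule integral_abs_bound_integral)
    show "integrable \<pi> (\<lambda>p. h (fst p) - h (snd p))"
      using int_fst int_snd by (rule Bochner_Integration.integrable_diff)
    show "integrable \<pi> (\<lambda>p. L * ?d p)"
      using d_int by (rule integrable_mult_right)
    show "\<bar>h (fst p) - h (snd p)\<bar> \<le> L * ?d p" for p
      by (rule periodic_lipschitz_torus_dist[OF h])
  qed
  also have "\<dots> = L * expectation ?d"
    by simp
  finally have abs_le: "\<bar>(\<integral>x. h x \<partial>\<mu>) - (\<integral>x. h x \<partial>\<nu>)\<bar> \<le> L * expectation ?d"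
    by (simp add: diff)
  have "((\<integral>x. h x \<partial>\<mu>) - (\<integral>x. h x \<partial>\<nu>))\<^sup>2 \<le> L\<^sup>2 * (expectation ?d)\<^sup>2"
    using power_mono[OF abs_le abs_ge_zero, of 2] by (simp add: power_mult_distrib)
  also have "(expectation ?d)\<^sup>2 \<le> expectation (\<lambda>p. (?d p)\<^sup>2)"
    using d_int d2_int convex_power2 by (intro jensens_inequality[where I=UNIV]) auto
  finally show ?thesis
    by (simp add: mult_left_mono)
qed

text \<open>This is \<open>W\<^sub>1 \<le> W\<^sub>2\<close>, with \<open>W\<^sub>1\<close> in its Kantorovich--Rubinstein dual form.\<close>

lemma integral_diff_le_W2:
  fixes \<mu> \<nu> :: "(real^'d) measure"
  assumes \<mu>\<nu>: "torus_prob \<mu>" "torus_prob \<nu>" and h: "periodic h" "L-lipschitz_on UNIV h"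
  shows "\<bar>(\<integral>x. h x \<partial>\<mu>) - (\<integral>x. h x \<partial>\<nu>)\<bar> \<le> L * W2 \<mu> \<nu>"
proof -
  define D where "D = ((\<integral>x. h x \<partial>\<mu>) - (\<integral>x. h x \<partial>\<nu>))\<^sup>2"
  define costs where "costs = (\<lambda>\<pi>. \<integral>p. (torus_dist (fst p) (snd p))\<^sup>2 \<partial>\<pi>) ` couplings \<mu> \<nu>"
  have ne: "costs \<noteq> {}"
    using pair_measure_in_couplings[OF \<mu>\<nu>] by (auto simp: costs_def)
  have D_le: "D \<le> L\<^sup>2 * c" if "c \<in> costs" for c
    using that coupling_integral_diff_le[OF _ h] by (auto simp: costs_def D_def)
  have "D \<le> L\<^sup>2 * Inf costs"
  proof (cases "L = 0")
    case True
    then show ?thesis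
      using D_le ne by auto
  next
    case False
    have "D / L\<^sup>2 \<le> Inf costs"
      using D_le ne False by (intro cInf_greatest) (auto simp: field_simps)
    then show ?thesis
      using False by (simp add: field_simps)
  qed
  then have "sqrt D \<le> sqrt (L\<^sup>2 * Inf costs)"
    by (rule real_sqrt_le_mono)
  then show ?thesis
    using lipschitz_on_nonneg[OF h(2)] by (simp add: D_def costs_def W2_def real_sqrt_mult)
qed

lemma W2_tendsto_integral:
  fixes \<mu>s :: "nat \<Rightarrow> (real^'d) measure" and h :: "real^'d \<Rightarrow> real"
  assumes "\<And>n. torus_prob (\<mu>s n)" "torus_prob \<mu>" "(\<lambda>n. W2 (\<mu>s n) \<mu>) \<longlonglongrightarrow> 0"
    and "periodic h" "L-lipschitz_on UNIV h"
  shows "(\<lambda>n. \<integral>x. h x \<partial>\<mu>s n) \<longlonglongrightarrow> (\<integral>x. h x \<partial>\<mu>)"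
proof (rule LIM_zero_cancel, rule Lim_null_comparison)
  show "\<forall>\<^sub>F n in sequentially. norm ((\<integral>x. h x \<partial>\<mu>s n) - (\<integral>x. h x \<partial>\<mu>)) \<le> L * W2 (\<mu>s n) \<mu>"
    using integral_diff_le_W2[OF assms(1,2,4,5)] by simp
  show "(\<lambda>n. L * W2 (\<mu>s n) \<mu>) \<longlonglongrightarrow> 0"
    using tendsto_mult_right_zero[OF assms(3)] .
qed

section \<open>Periodic Lipschitz functions determine measures on the torus\<close>

lemma finite_measure_eqI_lipschitz:
  fixes M N :: "'a::metric_space measure"
  assumes "finite_measure M" "finite_measure N" and sets: "sets M = sets borel" "sets N = sets borel"
    and eq: "\<And>(h :: 'a \<Rightarrow> real) L. L-lipschitz_on UNIV h \<Longrightarrow> (\<And>z. \<bar>h z\<bar> \<le> 1) \<Longrightarrow> (\<integral>z. h z \<partial>M) = (\<integral>z. h z \<partial>N)"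
  shows "M = N"
proof -
  interpret M: finite_measure M by fact
  interpret N: finite_measure N by fact
  have space: "space M = UNIV" "space N = UNIV"
    using sets_eq_imp_space_eq[OF sets(1)] sets_eq_imp_space_eq[OF sets(2)] by simp_all
  have measure_open: "measure M U = measure N U" if "open U" for U
  proof (cases "U = UNIV")
    case True
    have "(\<integral>z. 1 \<partial>M) = (\<integral>z. (1 :: real) \<partial>N)"
      by (rule eq[where h="\<lambda>_. 1"]) (auto intro: lipschitz_on_constant)
    then show ?thesis
      using True space by simp
  next
    case False
    define F where "F = - U"
    have F: "closed F" "F \<noteq> {}"
      using \<open>open U\<close> False by (auto simp: F_def)
    define h where "h j z = min 1 (real j * infdist z F)" for j :: nat and z
    have h_lip: "(real j)-lipschitz_on UNIV (h j)" for j
    proof (rule lipschitz_onI)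
      fix z w
      have "dist (h j z) (h j w) \<le> \<bar>real j * infdist z F - real j * infdist w F\<bar>"
        unfolding h_def dist_real_def by linarith
      also have "\<dots> \<le> real j * dist z w"
        by (simp add: abs_mult mult_left_mono infdist_triangle_abs flip: right_diff_distrib)
      finally show "dist (h j z) (h j w) \<le> real j * dist z w" .
    qed simp
    have h_bound: "\<bar>h j z\<bar> \<le> 1" for j z
      using infdist_nonneg[of z F] by (simp add: h_def)
    have h_lim: "(\<lambda>j. h j z) \<longlonglongrightarrow> indicator U z" for z
    proof (cases "z \<in> U")
      case True
      then have pos: "0 < infdist z F"
        using F by (intro infdist_pos_not_in_closed) (auto simp: F_def)
      obtain j0 :: nat where j0: "1 / infdist z F < j0"
        using reals_Archimedean2 by blast
      have "h j z = 1" if "j0 \<le> j" for j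
      proof -
        have "1 / infdist z F < real j"
          using j0 that by (meson of_nat_le_iff order_less_le_trans)
        then have "1 \<le> real j * infdist z F"
          using pos by (simp add: field_simps)
        then show ?thesis
          by (simp add: h_def)
      qed
      then have "\<forall>\<^sub>F j in sequentially. h j z = 1"
        unfolding eventually_sequentially by blast
      then show ?thesis
        using True by (simp add: tendsto_eventually)
    next
      case False
      then show ?thesis
        by (simp add: h_def F_def)
    qed
    have lim_int: "(\<lambda>j. \<integral>z. h j z \<partial>K) \<longlonglongrightarrow> (\<integral>z. indicator U z \<partial>K)"
      if K: "sets K = sets borel" "finite_measure K" for K :: "'a measure"
    proof (rule integral_dominated_convergence[where w="\<lambda>_. 1"])
      show "(\<lambda>z. indicator U z :: real) \<in> borel_measurable K"
        using \<open>open U\<close> by (simp add: measurable_cong_sets[OF K(1) refl] borel_open)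
      show "h j \<in> borel_measurable K" for j
        using lipschitz_borel_measurable[OF h_lip] measurable_cong_sets[OF K(1) refl] by blast
      show "integrable K (\<lambda>_. 1 :: real)"
        using K(2) by (rule finite_measure.integrable_const)
      show "AE z in K. (\<lambda>j. h j z) \<longlonglongrightarrow> indicator U z"
        using h_lim by simp
      show "AE z in K. norm (h j z) \<le> 1" for j
        using h_bound by simp
    qed
    have "(\<integral>z. indicator U z \<partial>M) = (\<integral>z. indicator U z \<partial>N :: real)"
      using LIMSEQ_unique[OF lim_int[OF sets(1) assms(1)]] lim_int[OF sets(2) assms(2)] eq[OF h_lip h_bound]
      by simp
    then show ?thesis
      using space by simp
  qed
  show ?thesis
  proof (rule measure_eqI_generator_eq[of "{S. open S}" UNIV M N "\<lambda>_. UNIV"])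
    show "Int_stable {S. open S}"
      by (auto simp: Int_stable_def)
    show "sets M = sigma_sets UNIV {S. open S}" "sets N = sigma_sets UNIV {S. open S}"
      using sets by (simp_all add: sets_borel)
    show "emeasure M X = emeasure N X" if "X \<in> {S. open S}" for X
      using measure_open[of X] that by (simp add: M.emeasure_eq_measure N.emeasure_eq_measure)
    show "emeasure M UNIV \<noteq> \<infinity>" for i :: nat
      by (simp add: M.emeasure_eq_measure)
  qed simp_all
qed

definition torus_embed :: "real^'d \<Rightarrow> complex^'d" where
  "torus_embed x = (\<chi> i. cis (2 * pi * x $ i))"

text \<open>A Borel left inverse of \<open>t \<mapsto> cis (2 * pi * t)\<close> on \<open>[0, 1)\<close>; clamping the argument
  of \<open>arccos\<close> to \<open>[-1, 1]\<close> makes it continuous on each half-plane.\<close>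

definition circle_angle :: "complex \<Rightarrow> real" where
  "circle_angle z =
     (if 0 \<le> Im z then arccos (max (- 1) (min 1 (Re z))) / (2 * pi)
      else 1 - arccos (max (- 1) (min 1 (Re z))) / (2 * pi))"

definition torus_unembed :: "complex^'d \<Rightarrow> real^'d" where
  "torus_unembed z = (\<chi> i. circle_angle (z $ i))"

lemma circle_angle_cis:
  assumes "0 \<le> t" "t < 1"
  shows "circle_angle (cis (2 * pi * t)) = t"
proof -
  have angle_cis: "circle_angle (cis x) =
      (if 0 \<le> sin x then arccos (cos x) / (2 * pi) else 1 - arccos (cos x) / (2 * pi))" for x
    by (simp add: circle_angle_def)
  show ?thesis
  proof (cases "t \<le> 1 / 2")
    case True
    then have "0 \<le> 2 * pi * t" "2 * pi * t \<le> pi"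
      using assms by (simp_all add: field_simps)
    then show ?thesis
      by (simp add: angle_cis sin_ge_zero arccos_cos)
  next
    case False
    then have "pi < 2 * pi * t" "2 * pi * t < 2 * pi" "0 \<le> 2 * pi * (1 - t)" "2 * pi * (1 - t) \<le> pi"
      using assms by (simp_all add: field_simps)
    moreover have "cos (2 * pi * t) = cos (2 * pi * (1 - t))"
      by (metis cos_2pi_minus right_diff_distrib mult.right_neutral)
    ultimately show ?thesis
      by (simp add: angle_cis sin_lt_zero arccos_cos not_le)
  qed
qed

lemma torus_unembed_embed: "x \<in> unit_cell \<Longrightarrow> torus_unembed (torus_embed x) = x"
  by (simp add: vec_eq_iff torus_unembed_def torus_embed_def unit_cell_def circle_angle_cis)

lemma borel_measurable_circle_angle: "circle_angle \<in> borel_measurable borel"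
proof -
  have "continuous_on UNIV (\<lambda>z::complex. arccos (max (- 1) (min 1 (Re z))))"
    by (rule continuous_on_compose2[OF continuous_on_arccos']) (auto intro!: continuous_intros)
  then have "(\<lambda>z::complex. arccos (max (- 1) (min 1 (Re z))) / (2 * pi)) \<in> borel_measurable borel"
    by (intro borel_measurable_continuous_onI continuous_on_divide continuous_on_const) auto
  then show ?thesis
    unfolding circle_angle_def by (intro measurable_If borel_measurable_diff) auto
qed

lemma borel_measurable_torus_unembed: "torus_unembed \<in> borel_measurable (borel :: (complex^'d) measure)"
proof (subst borel_measurable_euclidean_space, intro ballI)
  fix b :: "real^'d"
  assume "b \<in> Basis"
  then obtain i where b: "b = axis i 1"
    using axis_inverse by blast
  have "(\<lambda>z::complex^'d. z $ i) \<in> borel_measurable borel"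
    by (intro borel_measurable_continuous_onI continuous_intros)
  then show "(\<lambda>z. torus_unembed z \<bullet> b) \<in> borel_measurable borel"
    using measurable_compose[OF _ borel_measurable_circle_angle]
    by (simp add: b inner_axis torus_unembed_def)
qed

lemma periodic_torus_embed: "periodic torus_embed"
  unfolding periodic_def
proof (intro allI impI)
  fix x k :: "real^'d"
  assume "k \<in> int_lattice"
  then have "cis (2 * pi * (x + k) $ i) = cis (2 * pi * x $ i)" for i
    by (auto simp: int_lattice_def distrib_left cis_mult[symmetric] cis_multiple_2pi elim!: Ints_cases)
  then show "torus_embed (x + k) = torus_embed x"
    by (simp add: torus_embed_def vec_eq_iff)
qed

lemma norm_cis_diff_le: "norm (cis a - cis b) \<le> 2 * \<bar>a - b\<bar>"
proof -
  have sin_half: "\<bar>sin ((a - b) / 2)\<bar> \<le> \<bar>a - b\<bar> / 2" "\<bar>sin ((b - a) / 2)\<bar> \<le> \<bar>a - b\<bar> / 2"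
    using abs_sin_x_le_abs_x[of "(a - b) / 2"] abs_sin_x_le_abs_x[of "(b - a) / 2"]
    by (simp_all add: abs_minus_commute)
  have "\<bar>cos a - cos b\<bar> = 2 * \<bar>sin ((a + b) / 2)\<bar> * \<bar>sin ((b - a) / 2)\<bar>"
    by (simp add: cos_diff_cos abs_mult)
  also have "\<dots> \<le> 2 * 1 * (\<bar>a - b\<bar> / 2)"
    using sin_half(2) by (intro mult_mono abs_sin_le_one) auto
  finally have cos: "\<bar>cos a - cos b\<bar> \<le> \<bar>a - b\<bar>"
    by simp
  have "\<bar>sin a - sin b\<bar> = 2 * \<bar>sin ((a - b) / 2)\<bar> * \<bar>cos ((a + b) / 2)\<bar>"
    by (simp add: sin_diff_sin abs_mult)
  also have "\<dots> \<le> 2 * (\<bar>a - b\<bar> / 2) * 1"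
    using sin_half(1) by (intro mult_mono abs_cos_le_one) auto
  finally have sin: "\<bar>sin a - sin b\<bar> \<le> \<bar>a - b\<bar>"
    by simp
  show ?thesis
    using cmod_le[of "cis a - cis b"] cos sin by simp
qed

lemma torus_embed_lipschitz: "(4 * pi * CARD('d))-lipschitz_on UNIV (torus_embed :: real^'d \<Rightarrow> complex^'d)"
proof (rule lipschitz_onI)
  fix x y :: "real^'d"
  have "dist (torus_embed x) (torus_embed y) \<le> (\<Sum>i\<in>UNIV. norm ((torus_embed x - torus_embed y) $ i))"
    unfolding dist_norm norm_vec_def by (rule L2_set_le_sum) simp
  also have "\<dots> \<le> (\<Sum>i\<in>(UNIV :: 'd set). 4 * pi * dist x y)"
  proof (rule sum_mono)
    fix i
    have "norm ((torus_embed x - torus_embed y) $ i) \<le> 2 * \<bar>2 * pi * x $ i - 2 * pi * y $ i\<bar>"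
      unfolding torus_embed_def by (simp add: norm_cis_diff_le)
    also have "\<dots> = 4 * pi * \<bar>(x - y) $ i\<bar>"
      by (simp add: abs_mult flip: right_diff_distrib)
    also have "\<dots> \<le> 4 * pi * dist x y"
      unfolding dist_norm by (intro mult_left_mono component_le_norm_cart) auto
    finally show "norm ((torus_embed x - torus_embed y) $ i) \<le> 4 * pi * dist x y" .
  qed
  finally show "dist (torus_embed x) (torus_embed y) \<le> 4 * pi * CARD('d) * dist x y"
    by (simp add: mult_ac)
qed simp

lemma distr_torus_unembed_embed:
  fixes K :: "(real^'d) measure"
  assumes "sets K = sets borel" "emeasure K (- unit_cell) = 0"
  shows "distr (distr K borel torus_embed) borel torus_unembed = K"
proof -
  have embed: "torus_embed \<in> measurable K borel"
    unfolding measurable_cong_sets[OF assms(1) refl]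
    by (rule lipschitz_borel_measurable[OF torus_embed_lipschitz])
  have "- unit_cell \<in> null_sets K"
    using assms sets.compl_sets[OF unit_cell_in_sets_borel] by (simp add: null_sets_def Compl_eq_Diff_UNIV)
  then have "AE x in K. (torus_unembed \<circ> torus_embed) x = x"
    by (rule AE_I') (auto simp: torus_unembed_embed)
  then have "distr K borel (torus_unembed \<circ> torus_embed) = distr K borel (\<lambda>x. x)"
    by (rule distr_cong_AE[OF refl refl _ measurable_comp[OF embed borel_measurable_torus_unembed]
          measurable_ident_sets[OF assms(1)]])
  then show ?thesis
    using assms(1) distr_distr[OF borel_measurable_torus_unembed embed] distr_id2[of borel K] by simp
qed

text \<open>Lipschitz functions on \<open>(S\<^sup>1)\<^sup>d \<subseteq> complex^'d\<close> pull back along \<open>torus_embed\<close> to periodic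
  Lipschitz functions, and a measure on the unit cell is recovered from its push-forward through the
  Borel left inverse \<open>torus_unembed\<close>.\<close>

lemma torus_measure_eqI:
  fixes M N :: "(real^'d) measure"
  assumes "finite_measure M" "finite_measure N" and sets: "sets M = sets borel" "sets N = sets borel"
    and "emeasure M (- unit_cell) = 0" "emeasure N (- unit_cell) = 0"
    and eq: "\<And>(h :: real^'d \<Rightarrow> real) L. periodic h \<Longrightarrow> L-lipschitz_on UNIV h \<Longrightarrow> (\<integral>x. h x \<partial>M) = (\<integral>x. h x \<partial>N)"
  shows "M = N"
proof -
  have embed: "torus_embed \<in> measurable K borel" if "sets K = sets borel" for K :: "(real^'d) measure"
    unfolding measurable_cong_sets[OF that refl]
    by (rule lipschitz_borel_measurable[OF torus_embed_lipschitz])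
  have "distr M borel torus_embed = distr N borel torus_embed"
  proof (rule finite_measure_eqI_lipschitz)
    show "finite_measure (distr M borel torus_embed)" "finite_measure (distr N borel torus_embed)"
      using assms(1,2) embed sets by (auto intro: finite_measure.finite_measure_distr)
    fix h :: "complex^'d \<Rightarrow> real" and L
    assume h: "L-lipschitz_on UNIV h"
    have "(L * (4 * pi * CARD('d)))-lipschitz_on UNIV (\<lambda>x. h (torus_embed x))"
      using h by (intro lipschitz_on_compose2[OF torus_embed_lipschitz] lipschitz_on_subset[OF h]) auto
    moreover have "periodic (\<lambda>x. h (torus_embed x))"
      using periodic_torus_embed unfolding periodic_def by metis
    ultimately have "(\<integral>x. h (torus_embed x) \<partial>M) = (\<integral>x. h (torus_embed x) \<partial>N)"
      by (intro eq[where h="\<lambda>x. h (torus_embed x)"])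
    then show "(\<integral>z. h z \<partial>distr M borel torus_embed) = (\<integral>z. h z \<partial>distr N borel torus_embed)"
      using lipschitz_borel_measurable[OF h] embed sets by (simp add: integral_distr)
  qed simp_all
  then show ?thesis
    using distr_torus_unembed_embed[OF sets(1) assms(5)] distr_torus_unembed_embed[OF sets(2) assms(6)]
    by metis
qed

section \<open>Semiconvex functions\<close>

definition semiconvex :: "real \<Rightarrow> ('a::real_normed_vector \<Rightarrow> real) \<Rightarrow> bool" where
  "semiconvex lam u \<longleftrightarrow> convex_on UNIV (\<lambda>x. u x + lam / 2 * (norm x)\<^sup>2)"

lemma semiconvex_periodic_step:
  fixes u :: "real^'d \<Rightarrow> real"
  assumes "semiconvex lam u" "periodic u" "k \<in> int_lattice" "0 \<le> h" "h \<le> 1"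
  shows "u (x + h *\<^sub>R k) \<le> u x + lam / 2 * (h * (1 - h)) * (norm k)\<^sup>2"
proof -
  have "(1 - h) *\<^sub>R x + h *\<^sub>R (x + k) = x + h *\<^sub>R k"
    by (simp add: algebra_simps)
  moreover have "u (x + k) = u x"
    using assms(2,3) by (simp add: periodic_def)
  ultimately have "u (x + h *\<^sub>R k) + lam / 2 * (norm (x + h *\<^sub>R k))\<^sup>2
      \<le> (1 - h) * (u x + lam / 2 * (norm x)\<^sup>2) + h * (u x + lam / 2 * (norm (x + k))\<^sup>2)"
    using convex_onD[OF assms(1)[unfolded semiconvex_def], of h x "x + k"] assms(4,5) by simp
  also have "\<dots> = u x + lam / 2 * ((1 - h) * (norm x)\<^sup>2 + h * (norm (x + k))\<^sup>2)"
    by (simp add: field_simps)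
  also have "(1 - h) * (norm x)\<^sup>2 + h * (norm (x + k))\<^sup>2 = (norm (x + h *\<^sub>R k))\<^sup>2 + h * (1 - h) * (norm k)\<^sup>2"
    unfolding power2_norm_eq_inner by (simp add: inner_add_left inner_add_right inner_commute algebra_simps)
  finally have "u (x + h *\<^sub>R k) + lam / 2 * (norm (x + h *\<^sub>R k))\<^sup>2
      \<le> u x + lam / 2 * (norm (x + h *\<^sub>R k))\<^sup>2 + lam / 2 * (h * (1 - h)) * (norm k)\<^sup>2"
    by (simp add: distrib_left mult.assoc)
  then show ?thesis
    by linarith
qed

lemma semiconvex_periodic_line:
  fixes u :: "real^'d \<Rightarrow> real"
  assumes u: "semiconvex lam u" "periodic u" and k: "k \<in> int_lattice" and "0 \<le> lam"
  shows "\<bar>u (x + t *\<^sub>R k) - u x\<bar> \<le> lam / 2 * \<bar>t\<bar> * (norm k)\<^sup>2"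
proof -
  define h where "h = t - of_int \<lfloor>t\<rfloor>"
  have h: "0 \<le> h" "h \<le> 1"
    unfolding h_def by linarith+
  have "u (x + t *\<^sub>R k) = u ((x + h *\<^sub>R k) + of_int \<lfloor>t\<rfloor> *\<^sub>R k)"
    by (simp add: h_def algebra_simps)
  also have "\<dots> = u (x + h *\<^sub>R k)"
    using u(2) k by (simp add: periodic_def int_lattice_scaleR)
  finally have shift: "u (x + t *\<^sub>R k) = u (x + h *\<^sub>R k)" .
  have up: "u (x + h *\<^sub>R k) \<le> u x + lam / 2 * (h * (1 - h)) * (norm k)\<^sup>2"
    by (rule semiconvex_periodic_step[OF u k h])
  have "u ((x + h *\<^sub>R k) + (1 - h) *\<^sub>R k) \<le> u (x + h *\<^sub>R k) + lam / 2 * ((1 - h) * (1 - (1 - h))) * (norm k)\<^sup>2"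
    using h by (intro semiconvex_periodic_step[OF u k]) auto
  moreover have "u ((x + h *\<^sub>R k) + (1 - h) *\<^sub>R k) = u (x + k)"
    by (simp add: algebra_simps)
  moreover have "u (x + k) = u x"
    using u(2) k by (simp add: periodic_def)
  ultimately have down: "u x \<le> u (x + h *\<^sub>R k) + lam / 2 * (h * (1 - h)) * (norm k)\<^sup>2"
    by (simp add: algebra_simps)
  have "h * (1 - h) \<le> \<bar>t\<bar>"
  proof (cases "0 \<le> t")
    case True
    then have "h \<le> t"
      by (simp add: h_def)
    moreover have "h * (1 - h) \<le> h"
      using h by (intro mult_left_le) auto
    ultimately show ?thesis
      using True by linarith
  next
    case False
    then have "\<lfloor>t\<rfloor> \<le> - 1"
      by (simp add: floor_le_iff)
    then have "1 - h \<le> - t"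
      unfolding h_def by simp
    moreover have "h * (1 - h) \<le> 1 - h"
      using h by (intro mult_left_le_one_le) auto
    ultimately show ?thesis
      using False by linarith
  qed
  then have "lam / 2 * (h * (1 - h)) * (norm k)\<^sup>2 \<le> lam / 2 * \<bar>t\<bar> * (norm k)\<^sup>2"
    using \<open>0 \<le> lam\<close> by (intro mult_right_mono mult_left_mono) auto
  then show ?thesis
    using up down shift by linarith
qed

lemma semiconvex_periodic_lipschitz:
  fixes u :: "real^'d \<Rightarrow> real"
  assumes u: "semiconvex lam u" "periodic u" and "0 \<le> lam"
  shows "(lam / 2 * CARD('d))-lipschitz_on UNIV u"
proof (rule lipschitz_onI)
  have coords: "\<bar>u x - u y\<bar> \<le> lam / 2 * (\<Sum>i\<in>S. \<bar>x $ i - y $ i\<bar>)"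
    if "finite S" "\<And>i. i \<notin> S \<Longrightarrow> x $ i = y $ i" for S and x y :: "real^'d"
    using that
  proof (induction S arbitrary: x rule: finite_induct)
    case empty
    then have "x = y"
      by (simp add: vec_eq_iff)
    then show ?case
      by simp
  next
    case (insert i S)
    define z where "z = x + (y $ i - x $ i) *\<^sub>R axis i 1"
    have "\<bar>u z - u y\<bar> \<le> lam / 2 * (\<Sum>j\<in>S. \<bar>z $ j - y $ j\<bar>)"
      using insert.prems by (intro insert.IH) (auto simp: z_def axis_def)
    also have "(\<Sum>j\<in>S. \<bar>z $ j - y $ j\<bar>) = (\<Sum>j\<in>S. \<bar>x $ j - y $ j\<bar>)"
      using insert.hyps(2) by (intro sum.cong) (auto simp: z_def axis_def)
    finally have zy: "\<bar>u z - u y\<bar> \<le> lam / 2 * (\<Sum>j\<in>S. \<bar>x $ j - y $ j\<bar>)" .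
    have "\<bar>u z - u x\<bar> \<le> lam / 2 * \<bar>y $ i - x $ i\<bar> * (norm (axis i (1 :: real)))\<^sup>2"
      unfolding z_def by (rule semiconvex_periodic_line[OF u axis_in_int_lattice \<open>0 \<le> lam\<close>])
    then have "\<bar>u z - u x\<bar> \<le> lam / 2 * \<bar>x $ i - y $ i\<bar>"
      by (simp add: abs_minus_commute)
    then have "\<bar>u x - u y\<bar> \<le> lam / 2 * \<bar>x $ i - y $ i\<bar> + lam / 2 * (\<Sum>j\<in>S. \<bar>x $ j - y $ j\<bar>)"
      using zy by linarith
    then show ?case
      using insert.hyps by (simp add: distrib_left)
  qed
  fix x y :: "real^'d"
  have "\<bar>u x - u y\<bar> \<le> lam / 2 * (\<Sum>i\<in>UNIV. \<bar>x $ i - y $ i\<bar>)"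
    by (rule coords) auto
  also have "\<dots> \<le> lam / 2 * (\<Sum>i\<in>(UNIV :: 'd set). dist x y)"
    using component_le_norm_cart[of "x - y"] \<open>0 \<le> lam\<close>
    by (intro mult_left_mono sum_mono) (auto simp: dist_norm)
  finally show "dist (u x) (u y) \<le> lam / 2 * CARD('d) * dist x y"
    by (simp add: dist_real_def mult.assoc)
qed (use \<open>0 \<le> lam\<close> in simp)

lemma semiconvex_limit:
  fixes us :: "nat \<Rightarrow> 'a::real_normed_vector \<Rightarrow> real"
  assumes "\<And>n. semiconvex (lams n) (us n)" "lams \<longlonglongrightarrow> lam" "\<And>x. (\<lambda>n. us n x) \<longlonglongrightarrow> u x"
  shows "semiconvex lam u"
  unfolding semiconvex_def
proof (rule convex_onI)
  fix t :: real and x y :: 'a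
  assume t: "0 < t" "t < 1"
  let ?F = "\<lambda>n x. us n x + lams n / 2 * (norm x)\<^sup>2"
  have lim: "(\<lambda>n. ?F n z) \<longlonglongrightarrow> u z + lam / 2 * (norm z)\<^sup>2" for z
    by (intro tendsto_intros assms) simp
  have le: "?F n ((1 - t) *\<^sub>R x + t *\<^sub>R y) \<le> (1 - t) * ?F n x + t * ?F n y" for n
    using t by (intro convex_onD[OF assms(1)[of n, unfolded semiconvex_def]]) auto
  have lim': "(\<lambda>n. (1 - t) * ?F n x + t * ?F n y)
      \<longlonglongrightarrow> (1 - t) * (u x + lam / 2 * (norm x)\<^sup>2) + t * (u y + lam / 2 * (norm y)\<^sup>2)"
    by (intro tendsto_intros lim)
  show "u ((1 - t) *\<^sub>R x + t *\<^sub>R y) + lam / 2 * (norm ((1 - t) *\<^sub>R x + t *\<^sub>R y))\<^sup>2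
      \<le> (1 - t) * (u x + lam / 2 * (norm x)\<^sup>2) + t * (u y + lam / 2 * (norm y)\<^sup>2)"
    by (rule LIMSEQ_le[OF lim lim']) (use le in blast)
qed simp

lemma periodic_lipschitz_reflect:
  fixes W :: "real^'d \<Rightarrow> real"
  assumes "periodic W" "L-lipschitz_on UNIV W"
  shows "periodic (\<lambda>y. W (x - y))" "L-lipschitz_on UNIV (\<lambda>y. W (x - y))"
proof -
  show "periodic (\<lambda>y. W (x - y))"
    unfolding periodic_def
  proof (intro allI impI)
    fix y k :: "real^'d"
    assume k: "k \<in> int_lattice"
    have "W (x - (y + k)) = W ((x - y) - k)"
      by (simp add: algebra_simps)
    also have "\<dots> = W (x - y)"
      by (rule periodic_minus[OF assms(1) k])
    finally show "W (x - (y + k)) = W (x - y)" .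
  qed
  show "L-lipschitz_on UNIV (\<lambda>y. W (x - y))"
  proof (rule lipschitz_onI)
    fix y z
    show "dist (W (x - y)) (W (x - z)) \<le> L * dist y z"
      using lipschitz_onD[OF assms(2), of "x - y" "x - z"] by (simp add: dist_norm norm_minus_commute)
  qed (rule lipschitz_on_nonneg[OF assms(2)])
qed

lemma periodic_conv:
  fixes W :: "real^'d \<Rightarrow> real"
  assumes "periodic W"
  shows "periodic (conv W \<rho>)"
  unfolding periodic_def conv_def
proof (intro allI impI)
  fix x k :: "real^'d"
  assume k: "k \<in> int_lattice"
  have "W (x + k - y) = W ((x - y) + k)" for y
    by (simp add: algebra_simps)
  also have "W ((x - y) + k) = W (x - y)" for y
    using assms k by (simp add: periodic_def)
  finally show "(\<integral>y. W (x + k - y) \<partial>\<rho>) = (\<integral>y. W (x - y) \<partial>\<rho>)"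
    by simp
qed

lemma conv_lipschitz:
  fixes W :: "real^'d \<Rightarrow> real"
  assumes \<rho>: "torus_prob \<rho>" and W: "periodic W" "L-lipschitz_on UNIV W"
  shows "L-lipschitz_on UNIV (conv W \<rho>)"
proof (rule lipschitz_onI)
  interpret prob_space \<rho>
    using \<rho> by (simp add: torus_prob_def)
  have sets: "sets \<rho> = sets borel"
    using \<rho> by (simp add: torus_prob_def)
  have integrable: "integrable \<rho> (\<lambda>z. W (a - z))" for a
  proof -
    obtain B where "\<And>z. \<bar>W (a - z)\<bar> \<le> B"
      using periodic_lipschitz_bounded[OF periodic_lipschitz_reflect[OF W]] by blast
    moreover have "(\<lambda>z. W (a - z)) \<in> borel_measurable \<rho>"
      unfolding measurable_cong_sets[OF sets refl]
      by (rule lipschitz_borel_measurable[OF periodic_lipschitz_reflect(2)[OF W]])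
    ultimately show ?thesis
      by (intro integrable_const_bound[where B=B]) auto
  qed
  fix x y
  have "dist (conv W \<rho> x) (conv W \<rho> y) = \<bar>\<integral>z. W (x - z) - W (y - z) \<partial>\<rho>\<bar>"
    using integrable by (simp add: conv_def dist_real_def)
  also have "\<dots> \<le> (\<integral>z. L * dist x y \<partial>\<rho>)"
  proof (rule integral_abs_bound_integral)
    show "integrable \<rho> (\<lambda>z. W (x - z) - W (y - z))"
      using integrable by simp
    show "\<bar>W (x - z) - W (y - z)\<bar> \<le> L * dist x y" for z
      using lipschitz_onD[OF W(2), of "x - z" "y - z"] by (simp add: dist_real_def dist_norm)
  qed simp
  also have "\<dots> = L * dist x y"
    by (simp add: prob_space)
  finally show "dist (conv W \<rho> x) (conv W \<rho> y) \<le> L * dist x y" .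
qed (rule lipschitz_on_nonneg[OF W(2)])

lemma conv_tendsto_W2:
  fixes \<rho>s :: "nat \<Rightarrow> (real^'d) measure" and W :: "real^'d \<Rightarrow> real"
  assumes "\<And>n. torus_prob (\<rho>s n)" "torus_prob \<rho>" "(\<lambda>n. W2 (\<rho>s n) \<rho>) \<longlonglongrightarrow> 0"
    and "periodic W" "L-lipschitz_on UNIV W"
  shows "(\<lambda>n. conv W (\<rho>s n) x) \<longlonglongrightarrow> conv W \<rho> x"
  unfolding conv_def using assms(1-3) periodic_lipschitz_reflect[OF assms(4,5)] by (rule W2_tendsto_integral)

definition cell_density :: "(real^'d \<Rightarrow> real) \<Rightarrow> (real^'d) measure" where
  "cell_density f = density lborel (\<lambda>x. ennreal (indicator unit_cell x * f x))"

lemma pos_density_iff: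
  "pos_density \<rho> f \<longleftrightarrow>
     f \<in> borel_measurable borel \<and> periodic f \<and> (\<forall>x. 0 < f x) \<and> \<rho> = cell_density f"
  by (simp add: pos_density_def cell_density_def)

lemma sets_cell_density [simp]: "sets (cell_density f) = sets borel"
  by (simp add: cell_density_def)

lemma space_cell_density [simp]: "space (cell_density f) = UNIV"
  by (simp add: cell_density_def)

lemma borel_measurable_cell_density_weight:
  fixes f :: "real^'d \<Rightarrow> real"
  assumes "f \<in> borel_measurable borel"
  shows "(\<lambda>x. indicator unit_cell x * f x) \<in> borel_measurable borel"
  using assms unit_cell_in_sets_borel by (intro borel_measurable_times borel_measurable_indicator)

lemma nn_integral_unit_cell: "(\<integral>\<^sup>+x. c * indicator (unit_cell :: (real^'d) set) x \<partial>lborel) = c"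
  using nn_integral_cmult_indicator[of "unit_cell :: (real^'d) set" lborel c] unit_cell_in_sets_borel
  by (simp add: emeasure_unit_cell)

lemma emeasure_cell_density:
  fixes f :: "real^'d \<Rightarrow> real"
  assumes "f \<in> borel_measurable borel" "A \<in> sets borel"
  shows "emeasure (cell_density f) A = (\<integral>\<^sup>+x. ennreal (indicator unit_cell x * f x) * indicator A x \<partial>lborel)"
proof -
  have "(\<lambda>x. ennreal (indicator unit_cell x * f x)) \<in> borel_measurable lborel"
    using measurable_compose[OF borel_measurable_cell_density_weight[OF assms(1)] measurable_ennreal] by simp
  from emeasure_density[OF this, of A] show ?thesis
    unfolding cell_density_def using assms(2) by simp
qed

lemma emeasure_cell_density_outside:
  fixes f :: "real^'d \<Rightarrow> real"
  assumes "f \<in> borel_measurable borel"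
  shows "emeasure (cell_density f) (- unit_cell) = 0"
proof -
  have "- unit_cell \<in> sets (borel :: (real^'d) measure)"
    using sets.compl_sets[OF unit_cell_in_sets_borel] by (simp add: Compl_eq_Diff_UNIV)
  then have "emeasure (cell_density f) (- unit_cell)
      = (\<integral>\<^sup>+x. ennreal (indicator unit_cell x * f x) * indicator (- unit_cell) x \<partial>lborel)"
    by (rule emeasure_cell_density[OF assms])
  also have "(\<lambda>x. ennreal (indicator unit_cell x * f x) * indicator (- unit_cell) x) = (\<lambda>x. 0)"
    by (auto simp: indicator_def)
  finally show ?thesis
    by simp
qed

lemma integral_cell_density:
  fixes f h :: "real^'d \<Rightarrow> real"
  assumes "f \<in> borel_measurable borel" "\<And>x. 0 \<le> f x" "h \<in> borel_measurable borel"
  shows "(\<integral>x. h x \<partial>cell_density f) = (\<integral>x. indicator unit_cell x * f x * h x \<partial>lborel)"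
  unfolding cell_density_def
  using integral_density[of h lborel "\<lambda>x. indicator unit_cell x * f x"] assms
    borel_measurable_cell_density_weight[OF assms(1)]
  by simp

lemma finite_measure_cell_density:
  fixes f :: "real^'d \<Rightarrow> real"
  assumes "f \<in> borel_measurable borel" "\<And>x. f x \<le> C"
  shows "finite_measure (cell_density f)"
proof (rule finite_measureI)
  have "emeasure (cell_density f) UNIV = (\<integral>\<^sup>+x. ennreal (indicator unit_cell x * f x) * indicator UNIV x \<partial>lborel)"
    by (rule emeasure_cell_density[OF assms(1)]) simp
  also have "\<dots> \<le> (\<integral>\<^sup>+x. ennreal C * indicator (unit_cell :: (real^'d) set) x \<partial>lborel)"
    by (intro nn_integral_mono) (use assms(2) in \<open>auto simp: indicator_def intro: ennreal_leI\<close>)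
  also have "\<dots> = ennreal C"
    by (rule nn_integral_unit_cell)
  finally have "emeasure (cell_density f) UNIV \<le> ennreal C" .
  then show "emeasure (cell_density f) (space (cell_density f)) \<noteq> \<infinity>"
    using neq_top_trans[OF ennreal_neq_top] by simp
qed

lemma pos_density_bounds:
  fixes f :: "real^'d \<Rightarrow> real"
  assumes \<rho>: "torus_prob \<rho>" "pos_density \<rho> f" and c: "\<And>x y. f x \<le> c * f y"
  shows "f x \<le> c" "1 \<le> c * f x"
proof -
  have f: "f \<in> borel_measurable borel" "\<And>x. 0 < f x" and \<rho>_eq: "\<rho> = cell_density f"
    using \<rho>(2) by (auto simp: pos_density_iff)
  have c0: "0 \<le> c"
    using c[of x x] f(2)[of x] by (simp add: zero_le_mult_iff)
  have "emeasure \<rho> UNIV = 1"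
    using \<rho>(1) prob_space.emeasure_space_1[of \<rho>] by (simp add: torus_prob_def \<rho>_eq)
  then have one: "(\<integral>\<^sup>+y. ennreal (indicator unit_cell y * f y) \<partial>lborel) = 1"
    using f(1) by (simp add: \<rho>_eq emeasure_cell_density)
  have weight: "(\<lambda>y. ennreal (indicator unit_cell y * f y)) \<in> borel_measurable lborel"
    using measurable_compose[OF borel_measurable_cell_density_weight[OF f(1)] measurable_ennreal] by simp
  have ind_le: "ennreal (indicator unit_cell y * a) \<le> ennreal (indicator unit_cell y * b)"
    if "a \<le> b" for a b and y :: "real^'d"
    using that by (intro ennreal_leI) (simp add: indicator_def)
  have cell: "(\<integral>\<^sup>+y. ennreal (indicator (unit_cell :: (real^'d) set) y * a) \<partial>lborel) = ennreal a"
    if "0 \<le> a" for a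
    using nn_integral_unit_cell[of "ennreal a"] that by (simp add: ennreal_mult ennreal_indicator mult.commute)
  have "ennreal (f x) = (\<integral>\<^sup>+y. ennreal (indicator (unit_cell :: (real^'d) set) y * f x) \<partial>lborel)"
    using cell[of "f x"] f(2)[of x] by simp
  also have "\<dots> \<le> (\<integral>\<^sup>+y. ennreal (indicator unit_cell y * (c * f y)) \<partial>lborel)"
    by (intro nn_integral_mono ind_le c)
  also have "\<dots> = (\<integral>\<^sup>+y. ennreal c * ennreal (indicator unit_cell y * f y) \<partial>lborel)"
  proof (intro nn_integral_cong)
    fix y
    show "ennreal (indicator unit_cell y * (c * f y)) = ennreal c * ennreal (indicator unit_cell y * f y)"
      using ennreal_mult[of c "indicator unit_cell y * f y"] c0 f(2)[of y] by (simp add: mult_ac)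
  qed
  also have "\<dots> = ennreal c"
    using weight one by (simp add: nn_integral_cmult)
  finally show "f x \<le> c"
    using c0 by (simp add: ennreal_le_iff)
  have "(1 :: ennreal) \<le> (\<integral>\<^sup>+y. ennreal (indicator (unit_cell :: (real^'d) set) y * (c * f x)) \<partial>lborel)"
    unfolding one[symmetric] by (intro nn_integral_mono ind_le c)
  then show "1 \<le> c * f x"
    using c0 f(2)[of x] by (simp add: cell ennreal_le_iff)
qed

lemma ln_pos_density_bound:
  fixes f :: "real^'d \<Rightarrow> real"
  assumes \<rho>: "torus_prob \<rho>" "pos_density \<rho> f" and K: "K-lipschitz_on UNIV (\<lambda>x. ln (f x))"
  shows "\<bar>ln (f x)\<bar> \<le> K * CARD('d)"
proof -
  have f: "periodic f" "\<And>x. 0 < f x"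
    using \<rho>(2) by (auto simp: pos_density_def)
  have "periodic (\<lambda>x. ln (f x))"
    using f(1) by (simp add: periodic_def)
  then have osc: "\<bar>ln (f x) - ln (f y)\<bar> \<le> K * CARD('d)" for x y
    by (rule periodic_lipschitz_oscillation[OF _ K])
  have "f x \<le> exp (K * CARD('d)) * f y" for x y
  proof -
    have "ln (f x) \<le> K * CARD('d) + ln (f y)"
      using osc[of x y] by linarith
    then have "exp (ln (f x)) \<le> exp (K * CARD('d) + ln (f y))"
      by simp
    then show ?thesis
      using f(2) by (simp add: exp_add)
  qed
  from pos_density_bounds[OF \<rho> this] have "f x \<le> exp (K * CARD('d))" "exp (- (K * CARD('d))) \<le> f x"
    by (auto simp: exp_minus field_simps)
  then have "ln (f x) \<le> K * CARD('d)" "- (K * CARD('d)) \<le> ln (f x)"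
    using f(2)[of x] ln_le_cancel_iff[of "f x" "exp (K * CARD('d))"] by (simp_all add: ln_ge_iff)
  then show ?thesis
    by simp
qed

lemma ln_pos_density_lipschitz:
  fixes V W :: "real^'d \<Rightarrow> real"
  assumes V: "periodic V" "LV-lipschitz_on UNIV V" and W: "periodic W" "LW-lipschitz_on UNIV W"
    and \<rho>: "torus_prob \<rho>" "pos_density \<rho> f" and u: "semiconvex lam (u_pot V W \<rho> f)"
    and lam: "0 \<le> lam" "lam \<le> Lam"
  shows "(Lam / 2 * CARD('d) + LV + LW)-lipschitz_on UNIV (\<lambda>x. ln (f x))"
proof -
  have "periodic (u_pot V W \<rho> f)"
    using V(1) periodic_conv[OF W(1)] \<rho>(2) by (simp add: periodic_def u_pot_def pos_density_def)
  then have "(lam / 2 * CARD('d))-lipschitz_on UNIV (u_pot V W \<rho> f)"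
    using u lam(1) by (intro semiconvex_periodic_lipschitz)
  then have "(Lam / 2 * CARD('d))-lipschitz_on UNIV (u_pot V W \<rho> f)"
    by (rule lipschitz_on_le) (use lam(2) in \<open>simp add: mult_right_mono\<close>)
  then have "(Lam / 2 * CARD('d) + LV + LW)-lipschitz_on UNIV (\<lambda>x. u_pot V W \<rho> f x - V x - conv W \<rho> x)"
    by (intro lipschitz_on_diff V(2) conv_lipschitz[OF \<rho>(1) W])
  then show ?thesis
    by (simp add: u_pot_def)
qed

section \<open>Compactness of the log-densities\<close>

lemma periodic_equilipschitz_convergent_subseq:
  fixes g :: "nat \<Rightarrow> real^'d \<Rightarrow> real"
  assumes per: "\<And>n. periodic (g n)" and lip: "\<And>n. K-lipschitz_on UNIV (g n)"
    and bound: "\<And>n x. \<bar>g n x\<bar> \<le> M"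
  obtains r G where "strict_mono r" "periodic G" "\<And>x. (\<lambda>j. g (r j) x) \<longlonglongrightarrow> G x"
proof -
  have K: "0 \<le> K"
    using lipschitz_on_nonneg[OF lip] .
  obtain G0 and r :: "nat \<Rightarrow> nat" where "continuous_on (cbox 0 1) G0" and r: "strict_mono r"
    and unif: "\<And>e. 0 < e \<Longrightarrow> \<exists>N. \<forall>n x. n \<ge> N \<and> x \<in> cbox 0 1 \<longrightarrow> norm (g (r n) x - G0 x) < e"
  proof (rule Arzela_Ascoli[of "cbox 0 1" g M])
    show "compact (cbox 0 (1 :: real^'d))"
      by (rule compact_cbox)
    show "norm (g n x) \<le> M" for n x
      using bound by simp
    show "\<exists>d>0. \<forall>n y. y \<in> cbox 0 1 \<and> norm (x - y) < d \<longrightarrow> norm (g n x - g n y) < e"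
      if "0 < e" for x e
    proof (intro exI conjI allI impI)
      show "0 < e / (K + 1)"
        using that K by simp
      fix n y
      assume "y \<in> cbox 0 1 \<and> norm (x - y) < e / (K + 1)"
      then have "norm (x - y) \<le> e / (K + 1)"
        by simp
      have "norm (g n x - g n y) \<le> K * norm (x - y)"
        by (rule lipschitz_on_normD[OF lip]) auto
      also have "\<dots> \<le> K * (e / (K + 1))"
        using \<open>norm (x - y) \<le> e / (K + 1)\<close> K by (rule mult_left_mono)
      also have "\<dots> < e"
        using K that by (simp add: field_simps)
      finally show "norm (g n x - g n y) < e" .
    qed
  qed (rule that)
  define G where "G x = G0 (x - lattice_floor x)" for x
  have lim: "(\<lambda>j. g (r j) x) \<longlonglongrightarrow> G x" for x
  proof (rule LIMSEQ_I)
    fix e :: real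
    assume "0 < e"
    then obtain N where N: "\<And>n z. n \<ge> N \<Longrightarrow> z \<in> cbox 0 1 \<Longrightarrow> norm (g (r n) z - G0 z) < e"
      using unif by blast
    have "x - lattice_floor x \<in> cbox 0 1"
      using diff_lattice_floor_in_unit_cell unit_cell_subset_cbox by blast
    then have "norm (g (r n) x - G x) < e" if "n \<ge> N" for n
      using N[OF that, of "x - lattice_floor x"] periodic_diff_lattice_floor[OF per[of "r n"], of x]
      by (simp add: G_def)
    then show "\<exists>N. \<forall>n\<ge>N. norm (g (r n) x - G x) < e"
      by blast
  qed
  have "periodic G"
    unfolding periodic_def
  proof (intro allI impI)
    fix x k :: "real^'d"
    assume "k \<in> int_lattice"
    then have "(\<lambda>j. g (r j) (x + k)) = (\<lambda>j. g (r j) x)"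
      using per by (simp add: periodic_def)
    then show "G (x + k) = G x"
      using lim[of "x + k"] lim[of x] LIMSEQ_unique by metis
  qed
  with r lim that show ?thesis
    by blast
qed

lemma W2_limit_pos_density:
  fixes \<rho>s :: "nat \<Rightarrow> (real^'d) measure" and fs :: "nat \<Rightarrow> real^'d \<Rightarrow> real"
  assumes \<rho>s: "\<And>n. torus_prob (\<rho>s n)" "torus_prob \<rho>" "(\<lambda>n. W2 (\<rho>s n) \<rho>) \<longlonglongrightarrow> 0"
    and fs: "\<And>n. pos_density (\<rho>s n) (fs n)" "\<And>n x. fs n x \<le> C" "\<And>x. (\<lambda>n. fs n x) \<longlonglongrightarrow> f x"
    and f: "periodic f" "\<And>x. 0 < f x"
  shows "pos_density \<rho> f"
proof -
  have fs_meas: "fs n \<in> borel_measurable borel" and fs_pos: "0 < fs n x"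
    and \<rho>s_eq: "\<rho>s n = cell_density (fs n)" for n x
    using fs(1) by (auto simp: pos_density_iff)
  have f_meas: "f \<in> borel_measurable borel"
    using fs(3) fs_meas by (rule borel_measurable_LIMSEQ_real)
  have f_le: "f x \<le> C" for x
    by (rule LIMSEQ_le_const2[OF fs(3)]) (use fs(2) in auto)
  have "\<rho> = cell_density f"
  proof (rule torus_measure_eqI)
    show "finite_measure \<rho>" "sets \<rho> = sets borel" "emeasure \<rho> (- unit_cell) = 0"
      using \<rho>s(2) by (auto simp: torus_prob_def prob_space_def)
    show "finite_measure (cell_density f)"
      by (rule finite_measure_cell_density[OF f_meas f_le])
    show "emeasure (cell_density f) (- unit_cell) = 0"
      by (rule emeasure_cell_density_outside[OF f_meas])
    fix h :: "real^'d \<Rightarrow> real" and L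
    assume h: "periodic h" "L-lipschitz_on UNIV h"
    obtain B where B: "\<And>x. \<bar>h x\<bar> \<le> B"
      using periodic_lipschitz_bounded[OF h] by blast
    have hm: "h \<in> borel_measurable borel"
      by (rule lipschitz_borel_measurable[OF h(2)])
    have weight_meas: "(\<lambda>x. indicator unit_cell x * g x * h x) \<in> borel_measurable lborel"
      if "g \<in> borel_measurable borel" for g :: "real^'d \<Rightarrow> real"
      using borel_measurable_times[OF borel_measurable_cell_density_weight[OF that] hm] by simp
    have "(\<lambda>n. \<integral>x. indicator unit_cell x * fs n x * h x \<partial>lborel)
        \<longlonglongrightarrow> (\<integral>x. indicator unit_cell x * f x * h x \<partial>lborel)"
    proof (rule integral_dominated_convergence[where w="\<lambda>x. C * B * indicator unit_cell x"])
      show "integrable lborel (\<lambda>x. C * B * indicator (unit_cell :: (real^'d) set) x :: real)"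
        using unit_cell_in_sets_borel[where 'd='d] emeasure_unit_cell[where 'd='d]
        by (intro integrable_mult_right) (simp add: integrable_indicator_iff)
      show "AE x in lborel. norm (indicator unit_cell x * fs n x * h x) \<le> C * B * indicator unit_cell x" for n
      proof (rule AE_I2)
        fix x
        have "\<bar>fs n x\<bar> \<le> C" "0 \<le> C"
          using fs_pos[of n x] fs(2)[of n x] by simp_all
        then have "\<bar>fs n x * h x\<bar> \<le> C * B"
          unfolding abs_mult using B[of x] by (intro mult_mono) auto
        then show "norm (indicator unit_cell x * fs n x * h x) \<le> C * B * indicator unit_cell x"
          by (auto simp: indicator_def mult.assoc)
      qed
      show "AE x in lborel. (\<lambda>n. indicator unit_cell x * fs n x * h x)
          \<longlonglongrightarrow> indicator unit_cell x * f x * h x"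
        using fs(3) by (intro AE_I2 tendsto_mult tendsto_const)
    qed (intro weight_meas fs_meas f_meas)+
    moreover have "(\<integral>x. h x \<partial>\<rho>s n) = (\<integral>x. indicator unit_cell x * fs n x * h x \<partial>lborel)" for n
      unfolding \<rho>s_eq using fs_meas hm fs_pos by (intro integral_cell_density less_imp_le)
    moreover have "(\<integral>x. h x \<partial>cell_density f) = (\<integral>x. indicator unit_cell x * f x * h x \<partial>lborel)"
      using f_meas hm f(2) by (intro integral_cell_density less_imp_le)
    ultimately have "(\<lambda>n. \<integral>x. h x \<partial>\<rho>s n) \<longlonglongrightarrow> (\<integral>x. h x \<partial>cell_density f)"
      by simp
    with W2_tendsto_integral[OF \<rho>s h] show "(\<integral>x. h x \<partial>\<rho>) = (\<integral>x. h x \<partial>cell_density f)"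
      by (rule LIMSEQ_unique)
  qed simp
  with f f_meas show ?thesis
    by (simp add: pos_density_iff)
qed

lemma W2_limit_of_lipschitz_log_densities:
  fixes \<rho>s :: "nat \<Rightarrow> (real^'d) measure" and fs :: "nat \<Rightarrow> real^'d \<Rightarrow> real"
  assumes \<rho>s: "\<And>n. torus_prob (\<rho>s n)" "torus_prob \<rho>" "(\<lambda>n. W2 (\<rho>s n) \<rho>) \<longlonglongrightarrow> 0"
    and fs: "\<And>n. pos_density (\<rho>s n) (fs n)" "\<And>n. K-lipschitz_on UNIV (\<lambda>x. ln (fs n x))"
  obtains r f where "strict_mono r" "pos_density \<rho> f" "\<And>x. (\<lambda>j. ln (fs (r j) x)) \<longlonglongrightarrow> ln (f x)"
proof -
  have fs_pos: "0 < fs n x" and fs_per: "periodic (\<lambda>x. ln (fs n x))" for n x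
    using fs(1) by (simp_all add: pos_density_def periodic_def)
  have bound: "\<bar>ln (fs n x)\<bar> \<le> K * CARD('d)" for n x
    using \<rho>s(1) fs by (rule ln_pos_density_bound)
  obtain r g where r: "strict_mono r" and "periodic g" and g: "\<And>x. (\<lambda>j. ln (fs (r j) x)) \<longlonglongrightarrow> g x"
    using periodic_equilipschitz_convergent_subseq[where g="\<lambda>n x. ln (fs n x)", OF fs_per fs(2) bound]
    by blast
  have "pos_density \<rho> (\<lambda>x. exp (g x))"
  proof (rule W2_limit_pos_density[where \<rho>s="\<lambda>j. \<rho>s (r j)" and fs="\<lambda>j. fs (r j)"])
    show "(\<lambda>j. W2 (\<rho>s (r j)) \<rho>) \<longlonglongrightarrow> 0"
      using LIMSEQ_subseq_LIMSEQ[OF \<rho>s(3) r] by (simp add: comp_def)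
    show "fs (r j) x \<le> exp (K * CARD('d))" for j x
    proof -
      have "exp (ln (fs (r j) x)) \<le> exp (K * CARD('d))"
        using bound[of "r j" x] by (simp add: abs_le_iff)
      then show ?thesis
        using fs_pos[of "r j" x] by simp
    qed
    show "(\<lambda>j. fs (r j) x) \<longlonglongrightarrow> exp (g x)" for x
      using tendsto_exp[OF g] fs_pos by simp
    show "periodic (\<lambda>x. exp (g x))"
      using \<open>periodic g\<close> by (simp add: periodic_def)
  qed (use \<rho>s fs(1) in simp_all)
  with r g that show ?thesis
    by simp
qed

theorem mainTheorem6:
  fixes V W :: "real^'d \<Rightarrow> real"
    and \<rho>s :: "nat \<Rightarrow> (real^'d) measure" and \<rho> :: "(real^'d) measure"
    and lams :: "nat \<Rightarrow> real" and lam0 :: real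
  assumes "C21_torus V" and "C21_torus W"
    and "\<And>n. torus_prob (\<rho>s n)" and "torus_prob \<rho>"
    and "(\<lambda>n. W2 (\<rho>s n) \<rho>) \<longlonglongrightarrow> 0"
    and "\<And>n. 0 \<le> lams n" and "lams \<longlonglongrightarrow> lam0" and "0 \<le> lam0"
    and "\<And>n. hess_lower_bound V W (\<rho>s n) (lams n)"
  shows "hess_lower_bound V W \<rho> lam0"
proof -
  obtain LV where V: "periodic V" "LV-lipschitz_on UNIV V"
    by (rule C21_torus_periodic_lipschitz[OF assms(1)])
  obtain LW where W: "periodic W" "LW-lipschitz_on UNIV W"
    by (rule C21_torus_periodic_lipschitz[OF assms(2)])
  have "\<forall>n. \<exists>f. pos_density (\<rho>s n) f \<and> semiconvex (lams n) (u_pot V W (\<rho>s n) f)"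
    using assms(9) by (simp add: hess_lower_bound_def semiconvex_def)
  then obtain fs where fs: "\<And>n. pos_density (\<rho>s n) (fs n)" "\<And>n. semiconvex (lams n) (u_pot V W (\<rho>s n) (fs n))"
    by metis
  obtain Lam where "\<And>n. lams n \<le> Lam"
    using Bseq_bdd_above[OF convergent_imp_Bseq[OF convergentI[OF assms(7)]]] by (auto simp: bdd_above_def)
  then have "(Lam / 2 * CARD('d) + LV + LW)-lipschitz_on UNIV (\<lambda>x. ln (fs n x))" for n
    using ln_pos_density_lipschitz[OF V W assms(3) fs(1,2) assms(6)] by blast
  then obtain r f where r: "strict_mono r" and "pos_density \<rho> f"
    and ln_lim: "\<And>x. (\<lambda>j. ln (fs (r j) x)) \<longlonglongrightarrow> ln (f x)"
    using W2_limit_of_lipschitz_log_densities[OF assms(3-5) fs(1)] by blast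
  moreover have "semiconvex lam0 (u_pot V W \<rho> f)"
  proof (rule semiconvex_limit[where lams="\<lambda>j. lams (r j)" and us="\<lambda>j. u_pot V W (\<rho>s (r j)) (fs (r j))"])
    show "semiconvex (lams (r j)) (u_pot V W (\<rho>s (r j)) (fs (r j)))" for j
      by (rule fs(2))
    show "(\<lambda>j. lams (r j)) \<longlonglongrightarrow> lam0"
      using LIMSEQ_subseq_LIMSEQ[OF assms(7) r] by (simp add: comp_def)
    have "(\<lambda>j. W2 (\<rho>s (r j)) \<rho>) \<longlonglongrightarrow> 0"
      using LIMSEQ_subseq_LIMSEQ[OF assms(5) r] by (simp add: comp_def)
    from conv_tendsto_W2[OF assms(3,4) this W]
    show "(\<lambda>j. u_pot V W (\<rho>s (r j)) (fs (r j)) x) \<longlonglongrightarrow> u_pot V W \<rho> f x" for x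
      using tendsto_add[OF tendsto_add[OF ln_lim tendsto_const]] by (simp add: u_pot_def)
  qed
  ultimately show ?thesis
    unfolding hess_lower_bound_def semiconvex_def by blast
qed

end
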